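(* Let $\nu,\beta>0$, $\rho>1$, $n\ge1$, and let $X,X_1,\ldots,X_n$ be i.i.d. $\mathrm{Pareto}(\nu,\beta)$. Let $J_n\coloneqq\log_\rho X_{(n)}$ where $X_{(n)}=\max_iX_i$, and define \[p_{\mathrm{last}}\coloneqq\Pr\left(\rho^{\lceil J_n\rceil-1}<X\le\rho^{\lceil J_n\rceil}\right),\qquad p_{\mathrm{tail}}\coloneqq\Pr\left(X>\rho^{\lceil J_n\rceil}\right)\] (probabilities taken jointly over $X$ and $X_1,\ldots,X_n$). Then \[p_{\mathrm{last}}\le\frac{\rho^\beta-\rho^{-\beta}}{n+1}\qquad\text{and}\qquad\frac{\rho^{-\beta}}{n+1}\le p_{\mathrm{tail}}\le\frac{1}{n+1}.\]
   Context: $\mathrm{Pareto}(\nu,\beta)$ has CDF $1-(\nu/x)^\beta$ for $x>\nu$. *)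

theory Defs
  imports "HOL-Probability.Probability"
begin

definition pareto_cdf :: "real \<Rightarrow> real \<Rightarrow> real \<Rightarrow> real" where
  "pareto_cdf \<nu> \<beta> x = (if \<nu> < x then 1 - (\<nu> / x) powr \<beta> else 0)"

end

theory Submission
  imports Defs
begin

text \<open>
  Let \<open>Z = max(X\<^sub>1, \<dots>, X\<^sub>n)\<close> and let \<open>S = 1 - F\<close> be the Pareto survival function.
  Since \<open>Z\<close> is independent of \<open>X\<^sub>0\<close>, conditioning on \<open>Z\<close> gives \<open>P(g(Z) < X\<^sub>0) = E[S(g(Z))]\<close>.
  As \<open>Z\<close> has distribution function \<open>F ^ n\<close>, we get \<open>P(S(Z) \<ge> t) = (1 - t) ^ n\<close> for
  \<open>t \<in> [0,1]\<close>, hence \<open>E[S(Z)] = 1/(n+1)\<close> by the layer-cake formula. Moreover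
  \<open>S(\<rho> z) \<ge> \<rho> powr (-\<beta>) S(z)\<close> and \<open>F(\<rho> z) - F(z/\<rho>) \<le> (\<rho> powr \<beta> - \<rho> powr (-\<beta>)) S(z)\<close>.
  Finally \<open>Z > 0\<close> almost surely, and then \<open>Z \<le> \<rho> powr \<lceil>J\<rceil> < \<rho> Z\<close>: the tail event lies
  between \<open>{\<rho> Z < X\<^sub>0}\<close> and \<open>{Z < X\<^sub>0}\<close>, and the last-bucket event lies inside
  \<open>{Z/\<rho> < X\<^sub>0 \<le> \<rho> Z}\<close>.
\<close>

lemma borel_measurable_pareto_cdf[measurable]: "pareto_cdf \<nu> \<beta> \<in> borel_measurable borel"
  unfolding pareto_cdf_def[abs_def] by measurable

lemma pareto_cdf_le_one: "pareto_cdf \<nu> \<beta> x \<le> 1"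
  by (simp add: pareto_cdf_def)

lemma pareto_survival_eq:
  assumes "\<nu> > 0" "\<beta> > 0" "x > 0"
  shows "1 - pareto_cdf \<nu> \<beta> x = min 1 ((\<nu> / x) powr \<beta>)"
proof (cases "\<nu> < x")
  case True
  then have "(\<nu> / x) powr \<beta> < 1 powr \<beta>"
    using assms by (intro powr_less_mono2) auto
  then show ?thesis using True by (simp add: pareto_cdf_def)
next
  case False
  then have "1 \<le> (\<nu> / x) powr \<beta>" using assms by (simp add: ge_one_powr_ge_zero)
  then show ?thesis using False by (simp add: pareto_cdf_def)
qed

lemma pareto_cdf_nonneg:
  assumes "\<nu> > 0" "\<beta> > 0"
  shows "0 \<le> pareto_cdf \<nu> \<beta> x"
proof (cases "\<nu> < x")
  case True
  then show ?thesis using pareto_survival_eq[OF assms, of x] assms by simp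
qed (simp add: pareto_cdf_def)

lemma pareto_survival_scale:
  assumes "\<nu> > 0" "\<beta> > 0" "\<rho> \<ge> 1"
  shows "\<rho> powr (-\<beta>) * (1 - pareto_cdf \<nu> \<beta> x) \<le> 1 - pareto_cdf \<nu> \<beta> (\<rho> * x)"
proof (cases "x > 0")
  case True
  define r u where "r = \<rho> powr \<beta>" and "u = (\<nu> / x) powr \<beta>"
  have r: "r \<ge> 1" unfolding r_def using assms by (simp add: ge_one_powr_ge_zero)
  have "1 - pareto_cdf \<nu> \<beta> (\<rho> * x) = min 1 (u / r)"
    using pareto_survival_eq[of \<nu> \<beta> "\<rho> * x"] assms True
    by (simp add: u_def r_def powr_divide[symmetric] mult.commute)
  moreover have "1 - pareto_cdf \<nu> \<beta> x = min 1 u" "\<rho> powr (-\<beta>) = 1 / r"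
    using pareto_survival_eq[of \<nu> \<beta> x] assms True
    by (simp_all add: u_def r_def powr_minus_divide)
  moreover have "1 / r * min 1 u \<le> min 1 (u / r)"
    using r by (auto simp: min_def field_simps)
  ultimately show ?thesis by simp
next
  case False
  then have "\<rho> * x \<le> 0" using assms by (simp add: mult_nonneg_nonpos)
  then have "1 - pareto_cdf \<nu> \<beta> (\<rho> * x) = 1"
    using assms by (simp add: pareto_cdf_def)
  moreover have "\<rho> powr (-\<beta>) \<le> 1" using assms by (simp add: powr_minus_divide ge_one_powr_ge_zero)
  ultimately show ?thesis
    using pareto_cdf_nonneg[of \<nu> \<beta> x] pareto_cdf_le_one[of \<nu> \<beta> x] assms
    by (simp add: mult_le_one)
qed

lemma pareto_cdf_diff_le:
  assumes "\<nu> > 0" "\<beta> > 0" "\<rho> \<ge> 1"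
  shows "pareto_cdf \<nu> \<beta> (\<rho> * x) - pareto_cdf \<nu> \<beta> (x / \<rho>)
           \<le> (\<rho> powr \<beta> - \<rho> powr (-\<beta>)) * (1 - pareto_cdf \<nu> \<beta> x)"
proof (cases "x > 0")
  case True
  define r u where "r = \<rho> powr \<beta>" and "u = (\<nu> / x) powr \<beta>"
  have r: "r \<ge> 1" unfolding r_def using assms by (simp add: ge_one_powr_ge_zero)
  have "1 - pareto_cdf \<nu> \<beta> (\<rho> * x) = min 1 (u / r)"
    using pareto_survival_eq[of \<nu> \<beta> "\<rho> * x"] assms True
    by (simp add: u_def r_def powr_divide[symmetric] mult.commute)
  moreover have "1 - pareto_cdf \<nu> \<beta> (x / \<rho>) = min 1 (u * r)"
    using pareto_survival_eq[of \<nu> \<beta> "x / \<rho>"] assms True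
    by (simp add: u_def r_def powr_mult[symmetric])
  ultimately have "pareto_cdf \<nu> \<beta> (\<rho> * x) - pareto_cdf \<nu> \<beta> (x / \<rho>)
      = min 1 (u * r) - min 1 (u / r)"
    by linarith
  also have "\<dots> \<le> (r - 1 / r) * min 1 u"
  proof (cases "u \<ge> 1")
    case True
    then have "1 \<le> u * r" "1 / r \<le> u / r"
      using r mult_mono[of 1 u 1 r] by (auto intro: divide_right_mono)
    then have "min 1 (u * r) - min 1 (u / r) \<le> 1 - 1 / r" using r by (auto simp: min_def)
    also have "\<dots> \<le> (r - 1 / r) * min 1 u" using r True by simp
    finally show ?thesis .
  next
    case False
    moreover have "u \<ge> 0" by (simp add: u_def)
    ultimately have "u / r < 1" using r by (simp add: field_simps)
    then show ?thesis using False by (auto simp: min_def algebra_simps)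
  qed
  also have "\<dots> = (\<rho> powr \<beta> - \<rho> powr (-\<beta>)) * (1 - pareto_cdf \<nu> \<beta> x)"
    using pareto_survival_eq[of \<nu> \<beta> x] assms True
    by (simp add: u_def r_def powr_minus_divide)
  finally show ?thesis .
next
  case False
  then have "\<rho> * x \<le> 0" "x / \<rho> \<le> 0"
    using assms by (simp_all add: mult_nonneg_nonpos divide_nonpos_nonneg)
  then have "pareto_cdf \<nu> \<beta> (\<rho> * x) = 0" "pareto_cdf \<nu> \<beta> (x / \<rho>) = 0"
    using assms by (simp_all add: pareto_cdf_def)
  moreover have "\<rho> powr (-\<beta>) \<le> \<rho> powr \<beta>" using assms by (intro powr_mono) auto
  ultimately show ?thesis using pareto_cdf_le_one[of \<nu> \<beta> x] by simp
qed

lemma pareto_survival_ge_iff: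
  assumes "\<nu> > 0" "\<beta> > 0" "0 < t" "t \<le> 1"
  shows "t \<le> 1 - pareto_cdf \<nu> \<beta> x \<longleftrightarrow> x \<le> \<nu> / t powr (1 / \<beta>)"
proof (cases "x > 0")
  case True
  have "t \<le> 1 - pareto_cdf \<nu> \<beta> x \<longleftrightarrow> t \<le> (\<nu> / x) powr \<beta>"
    using pareto_survival_eq[of \<nu> \<beta> x] assms True by auto
  also have "\<dots> \<longleftrightarrow> (t powr (1 / \<beta>)) powr \<beta> \<le> (\<nu> / x) powr \<beta>"
    using assms by (simp add: powr_powr)
  also have "\<dots> \<longleftrightarrow> t powr (1 / \<beta>) \<le> \<nu> / x"
    using assms True by (meson not_le powr_less_mono2 powr_mono2 less_imp_le powr_ge_zero divide_nonneg_pos)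
  also have "\<dots> \<longleftrightarrow> x \<le> \<nu> / t powr (1 / \<beta>)"
    using assms True by (simp add: field_simps)
  finally show ?thesis .
next
  case False
  moreover have "0 < \<nu> / t powr (1 / \<beta>)" using assms by simp
  ultimately have "x \<le> \<nu> / t powr (1 / \<beta>)" by linarith
  then show ?thesis using False assms by (simp add: pareto_cdf_def)
qed

lemma pareto_cdf_quantile:
  assumes "\<nu> > 0" "\<beta> > 0" "0 < t" "t \<le> 1"
  shows "pareto_cdf \<nu> \<beta> (\<nu> / t powr (1 / \<beta>)) = 1 - t"
  using pareto_survival_eq[of \<nu> \<beta> "\<nu> / t powr (1 / \<beta>)"] assms by (simp add: powr_powr)

lemma nn_integral_layer_cake:
  fixes f :: "'a \<Rightarrow> real"
  assumes "sigma_finite_measure M" and f[measurable]: "f \<in> borel_measurable M"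
    and nonneg: "\<And>x. x \<in> space M \<Longrightarrow> 0 \<le> f x"
  shows "(\<integral>\<^sup>+x. ennreal (f x) \<partial>M) = (\<integral>\<^sup>+t\<in>{0..}. emeasure M {x \<in> space M. t \<le> f x} \<partial>lborel)"
proof -
  interpret pair_sigma_finite M lborel
    by (intro pair_sigma_finite.intro assms lborel.sigma_finite_measure_axioms)
  have "(\<integral>\<^sup>+x. ennreal (f x) \<partial>M) = (\<integral>\<^sup>+x. \<integral>\<^sup>+t. indicator {0..f x} t \<partial>lborel \<partial>M)"
    using nonneg by (intro nn_integral_cong) simp
  also have "\<dots> = (\<integral>\<^sup>+t. \<integral>\<^sup>+x. indicator {0..f x} t \<partial>M \<partial>lborel)"
    by (rule Fubini'[symmetric]) (simp add: indicator_def of_bool_def)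
  also have "\<dots> = (\<integral>\<^sup>+t\<in>{0..}. emeasure M {x \<in> space M. t \<le> f x} \<partial>lborel)"
  proof (intro nn_integral_cong)
    fix t :: real
    have "(\<integral>\<^sup>+x. indicator {0..f x} t \<partial>M)
        = (\<integral>\<^sup>+x. indicator {x \<in> space M. t \<le> f x} x * indicator {0..} t \<partial>M)"
      by (intro nn_integral_cong) (auto simp: indicator_def)
    then show "(\<integral>\<^sup>+x. indicator {0..f x} t \<partial>M)
        = emeasure M {x \<in> space M. t \<le> f x} * indicator {0..} t"
      by (simp add: nn_integral_multc)
  qed
  finally show ?thesis .
qed

lemma nn_integral_one_minus_power:
  "(\<integral>\<^sup>+t\<in>{0..1}. ennreal ((1 - t) ^ n) \<partial>lborel) = ennreal (1 / (real n + 1))"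
proof -
  have "((\<lambda>t. - ((1 - t) ^ Suc n / real (Suc n))) has_real_derivative (1 - t) ^ n) (at t)"
    for t :: real
  proof -
    have e: "real n * (1 - t) ^ (n - Suc 0) * (1 - t) = real n * (1 - t) ^ n" by (cases n) auto
    show ?thesis
      by (auto intro!: derivative_eq_intros simp del: of_nat_Suc, subst e, simp add: field_simps)
  qed
  then have "(\<integral>\<^sup>+t\<in>{0..1}. ennreal ((1 - t) ^ n) \<partial>lborel)
      = ennreal (- ((1 - 1) ^ Suc n / real (Suc n)) - - ((1 - 0) ^ Suc n / real (Suc n)))"
    by (intro nn_integral_FTC_Icc) auto
  then show ?thesis by simp
qed

lemma (in prob_space) emeasure_indep_var_pair:
  assumes indep: "indep_var S X T Y" and A: "A \<in> sets (S \<Otimes>\<^sub>M T)"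
  shows "emeasure M {\<omega> \<in> space M. (X \<omega>, Y \<omega>) \<in> A}
       = (\<integral>\<^sup>+\<omega>. emeasure M {\<omega>' \<in> space M. (X \<omega>, Y \<omega>') \<in> A} \<partial>M)"
proof -
  have X[measurable]: "X \<in> measurable M S" and Y[measurable]: "Y \<in> measurable M T"
    using indep by (blast dest: indep_var_rv1 indep_var_rv2)+
  interpret Y: prob_space "distr M T Y" by (rule prob_space_distr) simp
  have "emeasure M {\<omega> \<in> space M. (X \<omega>, Y \<omega>) \<in> A}
      = emeasure (distr M (S \<Otimes>\<^sub>M T) (\<lambda>\<omega>. (X \<omega>, Y \<omega>))) A"
    using A by (subst emeasure_distr) (auto intro!: arg_cong[where f="emeasure M"])
  also have "\<dots> = emeasure (distr M S X \<Otimes>\<^sub>M distr M T Y) A"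
    using indep by (simp add: indep_var_distribution_eq)
  also have "\<dots> = (\<integral>\<^sup>+x. emeasure (distr M T Y) (Pair x -` A) \<partial>distr M S X)"
    using A by (intro Y.emeasure_pair_measure_alt) simp
  also have "\<dots> = (\<integral>\<^sup>+\<omega>. emeasure (distr M T Y) (Pair (X \<omega>) -` A) \<partial>M)"
    using A by (intro nn_integral_distr) (auto intro!: Y.measurable_emeasure_Pair)
  also have "\<dots> = (\<integral>\<^sup>+\<omega>. emeasure M {\<omega>' \<in> space M. (X \<omega>, Y \<omega>') \<in> A} \<partial>M)"
    using A by (intro nn_integral_cong) (auto simp: emeasure_distr intro!: arg_cong[where f="emeasure M"])
  finally show ?thesis .
qed

lemma (in prob_space) emeasure_indep_var_less:
  fixes Z Y :: "'a \<Rightarrow> real"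
  assumes "indep_var borel Z borel Y" and g[measurable]: "g \<in> borel_measurable borel"
    and cdf: "\<And>x. prob {\<omega> \<in> space M. Y \<omega> \<le> x} = F x"
  shows "emeasure M {\<omega> \<in> space M. g (Z \<omega>) < Y \<omega>} = (\<integral>\<^sup>+\<omega>. ennreal (1 - F (g (Z \<omega>))) \<partial>M)"
proof -
  have [measurable]: "Y \<in> borel_measurable M" using assms(1) by (rule indep_var_rv2)
  have tail: "emeasure M {\<omega>' \<in> space M. x < Y \<omega>'} = ennreal (1 - F x)" for x
  proof -
    have "{\<omega>' \<in> space M. x < Y \<omega>'} = space M - {\<omega>' \<in> space M. Y \<omega>' \<le> x}" by auto
    then show ?thesis
      using prob_compl[of "{\<omega>' \<in> space M. Y \<omega>' \<le> x}"] cdf[of x] by (simp add: emeasure_eq_measure)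
  qed
  let ?A = "{p \<in> space (borel \<Otimes>\<^sub>M borel). g (fst p) < snd p}"
  have "emeasure M {\<omega> \<in> space M. (Z \<omega>, Y \<omega>) \<in> ?A}
      = (\<integral>\<^sup>+\<omega>. emeasure M {\<omega>' \<in> space M. (Z \<omega>, Y \<omega>') \<in> ?A} \<partial>M)"
    using assms(1) by (rule emeasure_indep_var_pair) measurable
  then show ?thesis by (simp add: tail space_pair_measure)
qed

lemma (in prob_space) emeasure_indep_var_interval:
  fixes Z Y :: "'a \<Rightarrow> real"
  assumes "indep_var borel Z borel Y"
    and [measurable]: "a \<in> borel_measurable borel" "b \<in> borel_measurable borel"
    and cdf: "\<And>x. prob {\<omega> \<in> space M. Y \<omega> \<le> x} = F x"
  shows "emeasure M {\<omega> \<in> space M. a (Z \<omega>) < Y \<omega> \<and> Y \<omega> \<le> b (Z \<omega>)}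
       = (\<integral>\<^sup>+\<omega>. ennreal (F (b (Z \<omega>)) - F (a (Z \<omega>))) \<partial>M)"
proof -
  have [measurable]: "Y \<in> borel_measurable M" using assms(1) by (rule indep_var_rv2)
  have interval: "emeasure M {\<omega>' \<in> space M. x < Y \<omega>' \<and> Y \<omega>' \<le> x'} = ennreal (F x' - F x)" for x x'
  proof (cases "x \<le> x'")
    case True
    then have "{\<omega>' \<in> space M. Y \<omega>' \<le> x} \<subseteq> {\<omega>' \<in> space M. Y \<omega>' \<le> x'}" by auto
    moreover have "{\<omega>' \<in> space M. x < Y \<omega>' \<and> Y \<omega>' \<le> x'}
        = {\<omega>' \<in> space M. Y \<omega>' \<le> x'} - {\<omega>' \<in> space M. Y \<omega>' \<le> x}" by auto
    ultimately show ?thesis by (simp add: emeasure_eq_measure finite_measure_Diff cdf)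
  next
    case False
    then have "F x' \<le> F x" unfolding cdf[symmetric] by (intro finite_measure_mono) auto
    moreover have "{\<omega>' \<in> space M. x < Y \<omega>' \<and> Y \<omega>' \<le> x'} = {}" using False by auto
    ultimately show ?thesis by (simp only: emeasure_empty ennreal_neg diff_le_0_iff_le)
  qed
  let ?A = "{p \<in> space (borel \<Otimes>\<^sub>M borel). a (fst p) < snd p \<and> snd p \<le> b (fst p)}"
  have "emeasure M {\<omega> \<in> space M. (Z \<omega>, Y \<omega>) \<in> ?A}
      = (\<integral>\<^sup>+\<omega>. emeasure M {\<omega>' \<in> space M. (Z \<omega>, Y \<omega>') \<in> ?A} \<partial>M)"
    using assms(1) by (rule emeasure_indep_var_pair) measurable
  then show ?thesis by (simp add: interval space_pair_measure)
qed

lemma (in prob_space) indep_var_Max: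
  fixes X :: "'i \<Rightarrow> 'a \<Rightarrow> real"
  assumes "finite I" "i \<notin> I" and indep: "indep_vars (\<lambda>_. borel) X (insert i I)"
  shows "indep_var borel (\<lambda>\<omega>. Max ((\<lambda>j. X j \<omega>) ` I)) borel (X i)"
proof -
  have "indep_var
      borel ((\<lambda>f. Max (f ` I)) \<circ> (\<lambda>\<omega>. restrict (\<lambda>j. X j \<omega>) I))
      borel ((\<lambda>f. f i) \<circ> (\<lambda>\<omega>. restrict (\<lambda>j. X j \<omega>) {i}))"
    using assms by (intro indep_var_compose[OF indep_var_restrict[OF indep]] borel_measurable_Max) auto
  also have "(\<lambda>f. Max (f ` I)) \<circ> (\<lambda>\<omega>. restrict (\<lambda>j. X j \<omega>) I) = (\<lambda>\<omega>. Max ((\<lambda>j. X j \<omega>) ` I))"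
    by (auto cong: rev_conj_cong)
  also have "(\<lambda>f. f i) \<circ> (\<lambda>\<omega>. restrict (\<lambda>j. X j \<omega>) {i}) = X i"
    by auto
  finally show ?thesis .
qed

lemma (in prob_space) prob_Max_le:
  fixes X :: "'i \<Rightarrow> 'a \<Rightarrow> real"
  assumes "finite I" "I \<noteq> {}" and indep: "indep_vars (\<lambda>_. borel) X I"
  shows "prob {\<omega> \<in> space M. Max ((\<lambda>i. X i \<omega>) ` I) \<le> x} = (\<Prod>i\<in>I. prob {\<omega> \<in> space M. X i \<omega> \<le> x})"
proof -
  have "prob (\<Inter>i\<in>I. X i -` {..x} \<inter> space M) = (\<Prod>i\<in>I. prob (X i -` {..x} \<inter> space M))"
    using assms by (intro indep_varsD[OF indep]) auto
  moreover have "(\<Inter>i\<in>I. X i -` {..x} \<inter> space M) = {\<omega> \<in> space M. Max ((\<lambda>i. X i \<omega>) ` I) \<le> x}"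
    using assms by auto
  moreover have "X i -` {..x} \<inter> space M = {\<omega> \<in> space M. X i \<omega> \<le> x}" for i
    by auto
  ultimately show ?thesis by simp
qed

lemma powr_ceiling_log_bounds:
  assumes "\<rho> > 1" "x > 0"
  shows "x \<le> \<rho> powr \<lceil>log \<rho> x\<rceil>" and "\<rho> powr \<lceil>log \<rho> x\<rceil> < \<rho> * x"
    and "x / \<rho> \<le> \<rho> powr (real_of_int \<lceil>log \<rho> x\<rceil> - 1)"
proof -
  have x: "\<rho> powr (log \<rho> x) = x" using assms by simp
  show up: "x \<le> \<rho> powr \<lceil>log \<rho> x\<rceil>"
    using assms powr_mono[of "log \<rho> x" "\<lceil>log \<rho> x\<rceil>" \<rho>] by (simp add: x)
  have "\<rho> powr \<lceil>log \<rho> x\<rceil> < \<rho> powr (log \<rho> x + 1)"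
    using assms by (intro powr_less_mono) linarith+
  then show "\<rho> powr \<lceil>log \<rho> x\<rceil> < \<rho> * x" using assms by (simp add: powr_add x mult.commute)
  show "x / \<rho> \<le> \<rho> powr (real_of_int \<lceil>log \<rho> x\<rceil> - 1)"
    using up assms by (simp add: powr_diff divide_right_mono)
qed

lemma (in prob_space) prob_powr_ceiling_log_compare:
  fixes Z Y :: "'a \<Rightarrow> real"
  assumes "\<rho> > 1" and [measurable]: "Z \<in> borel_measurable M" "Y \<in> borel_measurable M"
    and pos: "AE \<omega> in M. Z \<omega> > 0"
  shows "prob {\<omega> \<in> space M. Y \<omega> > \<rho> powr \<lceil>log \<rho> (Z \<omega>)\<rceil>} \<le> prob {\<omega> \<in> space M. Z \<omega> < Y \<omega>}"
    and "prob {\<omega> \<in> space M. \<rho> * Z \<omega> < Y \<omega>} \<le> prob {\<omega> \<in> space M. Y \<omega> > \<rho> powr \<lceil>log \<rho> (Z \<omega>)\<rceil>}"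
    and "prob {\<omega> \<in> space M. \<rho> powr (real_of_int \<lceil>log \<rho> (Z \<omega>)\<rceil> - 1) < Y \<omega> \<and> Y \<omega> \<le> \<rho> powr \<lceil>log \<rho> (Z \<omega>)\<rceil>}
         \<le> prob {\<omega> \<in> space M. Z \<omega> / \<rho> < Y \<omega> \<and> Y \<omega> \<le> \<rho> * Z \<omega>}"
proof -
  have bounds: "AE \<omega> in M. Z \<omega> \<le> \<rho> powr \<lceil>log \<rho> (Z \<omega>)\<rceil> \<and> \<rho> powr \<lceil>log \<rho> (Z \<omega>)\<rceil> < \<rho> * Z \<omega>
      \<and> Z \<omega> / \<rho> \<le> \<rho> powr (real_of_int \<lceil>log \<rho> (Z \<omega>)\<rceil> - 1)"
    using pos by eventually_elim (simp add: powr_ceiling_log_bounds[OF \<open>\<rho> > 1\<close>])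
  show "prob {\<omega> \<in> space M. Y \<omega> > \<rho> powr \<lceil>log \<rho> (Z \<omega>)\<rceil>} \<le> prob {\<omega> \<in> space M. Z \<omega> < Y \<omega>}"
    by (intro finite_measure_mono_AE eventually_mono[OF bounds]) auto
  show "prob {\<omega> \<in> space M. \<rho> * Z \<omega> < Y \<omega>} \<le> prob {\<omega> \<in> space M. Y \<omega> > \<rho> powr \<lceil>log \<rho> (Z \<omega>)\<rceil>}"
    by (intro finite_measure_mono_AE eventually_mono[OF bounds]) auto
  show "prob {\<omega> \<in> space M. \<rho> powr (real_of_int \<lceil>log \<rho> (Z \<omega>)\<rceil> - 1) < Y \<omega> \<and> Y \<omega> \<le> \<rho> powr \<lceil>log \<rho> (Z \<omega>)\<rceil>}
         \<le> prob {\<omega> \<in> space M. Z \<omega> / \<rho> < Y \<omega> \<and> Y \<omega> \<le> \<rho> * Z \<omega>}"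
    by (intro finite_measure_mono_AE eventually_mono[OF bounds]) auto
qed

lemma (in prob_space) nn_integral_pareto_survival_power_cdf:
  fixes Z :: "'a \<Rightarrow> real"
  assumes "\<nu> > 0" "\<beta> > 0" and [measurable]: "Z \<in> borel_measurable M"
    and cdf: "\<And>x. prob {\<omega> \<in> space M. Z \<omega> \<le> x} = pareto_cdf \<nu> \<beta> x ^ k"
  shows "(\<integral>\<^sup>+\<omega>. ennreal (1 - pareto_cdf \<nu> \<beta> (Z \<omega>)) \<partial>M) = ennreal (1 / (real k + 1))"
proof -
  have level: "emeasure M {\<omega> \<in> space M. t \<le> 1 - pareto_cdf \<nu> \<beta> (Z \<omega>)} * indicator {0..} t
      = ennreal ((1 - t) ^ k) * indicator {0..1} t" for t
  proof -
    consider "t < 0" | "t = 0" | "0 < t" "t \<le> 1" | "1 < t" by fastforce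
    then show ?thesis
    proof cases
      case 2
      then have "{\<omega> \<in> space M. t \<le> 1 - pareto_cdf \<nu> \<beta> (Z \<omega>)} = space M"
        using pareto_cdf_le_one by auto
      then show ?thesis using 2 by (simp add: emeasure_space_1)
    next
      case 3
      then have "{\<omega> \<in> space M. t \<le> 1 - pareto_cdf \<nu> \<beta> (Z \<omega>)}
          = {\<omega> \<in> space M. Z \<omega> \<le> \<nu> / t powr (1 / \<beta>)}"
        using pareto_survival_ge_iff[OF assms(1,2)] by auto
      then show ?thesis
        using 3 cdf pareto_cdf_quantile[OF assms(1,2) 3] by (simp add: emeasure_eq_measure)
    next
      case 4
      then have "1 - pareto_cdf \<nu> \<beta> x < t" for x
        using pareto_cdf_nonneg[OF assms(1,2), of x] by linarith
      then have empty: "{\<omega> \<in> space M. t \<le> 1 - pareto_cdf \<nu> \<beta> (Z \<omega>)} = {}"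
        by (auto simp: not_le)
      show ?thesis unfolding empty using 4 by simp
    qed simp
  qed
  have "(\<integral>\<^sup>+\<omega>. ennreal (1 - pareto_cdf \<nu> \<beta> (Z \<omega>)) \<partial>M)
      = (\<integral>\<^sup>+t\<in>{0..}. emeasure M {\<omega> \<in> space M. t \<le> 1 - pareto_cdf \<nu> \<beta> (Z \<omega>)} \<partial>lborel)"
    using pareto_cdf_le_one by (intro nn_integral_layer_cake sigma_finite_measure_axioms) auto
  also have "\<dots> = (\<integral>\<^sup>+t\<in>{0..1}. ennreal ((1 - t) ^ k) \<partial>lborel)"
    by (simp add: level)
  finally show ?thesis by (simp add: nn_integral_one_minus_power)
qed

lemma (in prob_space) pareto_fresh_sample_bounds:
  fixes Z Y :: "'a \<Rightarrow> real"
  assumes "\<nu> > 0" "\<beta> > 0" "\<rho> \<ge> 1" and indep: "indep_var borel Z borel Y"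
    and cdf_Y: "\<And>x. prob {\<omega> \<in> space M. Y \<omega> \<le> x} = pareto_cdf \<nu> \<beta> x"
    and cdf_Z: "\<And>x. prob {\<omega> \<in> space M. Z \<omega> \<le> x} = pareto_cdf \<nu> \<beta> x ^ k"
  shows "prob {\<omega> \<in> space M. Z \<omega> < Y \<omega>} = 1 / real (k + 1)"
    and "\<rho> powr (-\<beta>) / real (k + 1) \<le> prob {\<omega> \<in> space M. \<rho> * Z \<omega> < Y \<omega>}"
    and "prob {\<omega> \<in> space M. Z \<omega> / \<rho> < Y \<omega> \<and> Y \<omega> \<le> \<rho> * Z \<omega>}
           \<le> (\<rho> powr \<beta> - \<rho> powr (-\<beta>)) / real (k + 1)"
proof -
  have [measurable]: "Z \<in> borel_measurable M" using indep by (rule indep_var_rv1)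
  define e where "e = 1 / real (k + 1)"
  have "e \<ge> 0" by (simp add: e_def)
  have survival: "(\<integral>\<^sup>+\<omega>. ennreal (1 - pareto_cdf \<nu> \<beta> (Z \<omega>)) \<partial>M) = ennreal e"
    using nn_integral_pareto_survival_power_cdf[OF assms(1,2) _ cdf_Z] by (simp add: e_def add.commute)
  have "emeasure M {\<omega> \<in> space M. Z \<omega> < Y \<omega>} = ennreal e"
    using emeasure_indep_var_less[OF indep, of "\<lambda>z. z"] cdf_Y survival by simp
  then show "prob {\<omega> \<in> space M. Z \<omega> < Y \<omega>} = 1 / real (k + 1)"
    using \<open>e \<ge> 0\<close> by (simp add: emeasure_eq_measure e_def)
  have "ennreal (\<rho> powr (-\<beta>) * e) = (\<integral>\<^sup>+\<omega>. \<rho> powr (-\<beta>) * ennreal (1 - pareto_cdf \<nu> \<beta> (Z \<omega>)) \<partial>M)"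
    using survival \<open>e \<ge> 0\<close> by (subst nn_integral_cmult) (auto simp: ennreal_mult)
  also have "\<dots> \<le> (\<integral>\<^sup>+\<omega>. ennreal (1 - pareto_cdf \<nu> \<beta> (\<rho> * Z \<omega>)) \<partial>M)"
    using pareto_survival_scale[OF assms(1-3)] pareto_cdf_le_one
    by (intro nn_integral_mono) (simp add: ennreal_mult[symmetric] ennreal_leI)
  also have "\<dots> = emeasure M {\<omega> \<in> space M. \<rho> * Z \<omega> < Y \<omega>}"
    using emeasure_indep_var_less[OF indep, of "\<lambda>z. \<rho> * z"] cdf_Y by simp
  finally show "\<rho> powr (-\<beta>) / real (k + 1) \<le> prob {\<omega> \<in> space M. \<rho> * Z \<omega> < Y \<omega>}"
    by (simp add: emeasure_eq_measure ennreal_le_iff e_def)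
  define c where "c = \<rho> powr \<beta> - \<rho> powr (-\<beta>)"
  have "c \<ge> 0" unfolding c_def using assms(2,3) by (intro diff_ge_0_iff_ge[THEN iffD2] powr_mono) auto
  have "emeasure M {\<omega> \<in> space M. Z \<omega> / \<rho> < Y \<omega> \<and> Y \<omega> \<le> \<rho> * Z \<omega>}
      = (\<integral>\<^sup>+\<omega>. ennreal (pareto_cdf \<nu> \<beta> (\<rho> * Z \<omega>) - pareto_cdf \<nu> \<beta> (Z \<omega> / \<rho>)) \<partial>M)"
    using emeasure_indep_var_interval[OF indep, of "\<lambda>z. z / \<rho>" "\<lambda>z. \<rho> * z"] cdf_Y by simp
  also have "\<dots> \<le> (\<integral>\<^sup>+\<omega>. c * ennreal (1 - pareto_cdf \<nu> \<beta> (Z \<omega>)) \<partial>M)"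
    using pareto_cdf_diff_le[OF assms(1-3)] pareto_cdf_le_one \<open>c \<ge> 0\<close>
    by (intro nn_integral_mono) (simp add: c_def ennreal_mult[symmetric] ennreal_leI)
  also have "\<dots> = ennreal (c * e)"
    using survival \<open>c \<ge> 0\<close> \<open>e \<ge> 0\<close> by (subst nn_integral_cmult) (auto simp: ennreal_mult)
  finally show "prob {\<omega> \<in> space M. Z \<omega> / \<rho> < Y \<omega> \<and> Y \<omega> \<le> \<rho> * Z \<omega>} \<le> c / real (k + 1)"
    using \<open>c \<ge> 0\<close> \<open>e \<ge> 0\<close> by (simp add: emeasure_eq_measure ennreal_le_iff e_def)
qed

theorem theorem5:
  fixes M :: "'a measure" and X :: "nat \<Rightarrow> 'a \<Rightarrow> real"
    and \<nu> \<beta> \<rho> :: real and n :: nat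
  assumes "prob_space M"
    and "\<nu> > 0" and "\<beta> > 0" and "\<rho> > 1" and "n \<ge> 1"
    and "prob_space.indep_vars M (\<lambda>_. borel) X {0..n}"
    and "\<And>i x. i \<in> {0..n} \<Longrightarrow> measure M {\<omega> \<in> space M. X i \<omega> \<le> x} = pareto_cdf \<nu> \<beta> x"
  defines "J \<equiv> \<lambda>\<omega>. log \<rho> (Max ((\<lambda>i. X i \<omega>) ` {1..n}))"
  defines "p_last \<equiv> measure M {\<omega> \<in> space M.
              \<rho> powr (real_of_int \<lceil>J \<omega>\<rceil> - 1) < X 0 \<omega> \<and> X 0 \<omega> \<le> \<rho> powr real_of_int \<lceil>J \<omega>\<rceil>}"
  defines "p_tail \<equiv> measure M {\<omega> \<in> space M. X 0 \<omega> > \<rho> powr real_of_int \<lceil>J \<omega>\<rceil>}"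
  shows "p_last \<le> (\<rho> powr \<beta> - \<rho> powr (-\<beta>)) / (n + 1)
         \<and> \<rho> powr (-\<beta>) / (n + 1) \<le> p_tail \<and> p_tail \<le> 1 / (n + 1)"
proof -
  interpret prob_space M by fact
  define Z where "Z \<omega> = Max ((\<lambda>i. X i \<omega>) ` {1..n})" for \<omega>
  have "insert 0 {1..n} = {0..n}" by auto
  then have indep: "indep_var borel Z borel (X 0)"
    unfolding Z_def using indep_var_Max[of "{1..n}" 0 X] assms(6) by simp
  then have Z[measurable]: "Z \<in> borel_measurable M" and X0[measurable]: "X 0 \<in> borel_measurable M"
    by (blast dest: indep_var_rv1 indep_var_rv2)+
  have cdf_X0: "prob {\<omega> \<in> space M. X 0 \<omega> \<le> x} = pareto_cdf \<nu> \<beta> x" for x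
    using assms(7) by simp
  have cdf_Z: "prob {\<omega> \<in> space M. Z \<omega> \<le> x} = pareto_cdf \<nu> \<beta> x ^ n" for x
    unfolding Z_def using assms(5,7) prob_Max_le[OF _ _ indep_vars_subset[OF assms(6)], of "{1..n}" x]
    by simp
  have "prob {\<omega> \<in> space M. Z \<omega> \<le> \<nu>} = 0"
    using cdf_Z[of \<nu>] assms(5) by (simp add: pareto_cdf_def)
  then have "AE \<omega> in M. Z \<omega> > 0"
    using \<open>\<nu> > 0\<close> by (subst (asm) prob_eq_0) auto
  note compare = prob_powr_ceiling_log_compare[OF \<open>\<rho> > 1\<close> Z X0 this]
  note fresh = pareto_fresh_sample_bounds[OF assms(2,3) less_imp_le[OF assms(4)] indep cdf_X0 cdf_Z]
  have J_eq: "J = (\<lambda>\<omega>. log \<rho> (Z \<omega>))" unfolding J_def Z_def ..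
  show ?thesis
    unfolding p_last_def p_tail_def J_eq using compare fresh by linarith
qed

end
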